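(* Let $q\equiv 3 \pmod 4$ be a prime power. In $G=\mathbb{Z}_2\times(\mathbb{F}_{q^2},+)$ define $B_0=(\{0\}\times D_0)\cup(\{1\}\times(\mathbb{F}_{q^2}\setminus D_0))$ and $B_1=(\{0\}\times D_2)\cup(\{1\}\times D_2)$. Then $|B_0|=q^2$, $|B_1|=q^2-1$, and in the group ring $\mathbb{Z}[G]$, $$\sum_{i=0,1}B_iB_i^{(-1)}=\{0\}\times\Big((q^2-2)\,\mathbb{F}_{q^2}^\ast+(2q^2-1)\cdot 0_{\mathbb{F}_{q^2}}\Big)+\{1\}\times\Big(2D_0-2D_2+(q^2-1)\,\mathbb{F}_{q^2}\Big).$$
   Context: Let $\omega$ be a primitive element of $\mathbb{F}_{q^2}$. For a positive divisor $N$ of $q^2-1$, the $N$-th cyclotomic classes are $C_i^{(N,q^2)}=\omega^i\langle\omega^N\rangle$ (index $i$ taken mod $N$). Set $D_i=C_i^{(4,q^2)}\cup C_{i+1}^{(4,q^2)}$ for $i=0,1,2,3$. For an additive abelian group $G$, a subset $X\subseteq G$ is identified with the group ring element $\sum_{x\in X}x\in\mathbb{Z}[G]$; $X^{(-1)}=\{-x:x\in X\}$; $G^\ast=G\setminus\{0_G\}$. For $X\in\mathbb{Z}[\mathbb{F}_{q^2}]$ and $\epsilon\in\mathbb{Z}_2$, $\{\epsilon\}\times X$ denotes the element of $\mathbb{Z}[\mathbb{Z}_2\times\mathbb{F}_{q^2}]$ obtained by replacing each $x$ with $(\epsilon,x)$ (coefficients kept), and $c\cdot 0_{\mathbb{F}_{q^2}}$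 denotes $c$ times the identity element. *)

theory Defs
  imports Main "HOL-Library.Z2" "HOL-Library.Product_Plus" "HOL-Library.Function_Algebras" "HOL-Number_Theory.Prime_Powers"
begin

text \<open>The two-element group Z_2 is modelled by the field type bit (HOL-Library.Z2).\<close>

instance bit :: finite
proof
  have "(UNIV :: bit set) = {0, 1}" by (auto intro: bit.exhaust)
  then show "finite (UNIV :: bit set)" by (metis finite.emptyI finite.insertI)
qed

definition primitive_element :: "'a::field \<Rightarrow> bool" where
  "primitive_element w \<longleftrightarrow> w \<noteq> 0 \<and> range (\<lambda>k::nat. w ^ k) = UNIV - {0}"

definition cyc_class :: "nat \<Rightarrow> 'a::field \<Rightarrow> nat \<Rightarrow> 'a set" where
  "cyc_class N w i = {w ^ i * (w ^ N) ^ k | k. True}"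

definition Dset :: "'a::field \<Rightarrow> nat \<Rightarrow> 'a set" where
  "Dset w i = cyc_class 4 w (i mod 4) \<union> cyc_class 4 w ((i + 1) mod 4)"

text \<open>Group ring Z[G]: integer-valued coefficient functions on G.\<close>
type_synonym 'g grpring = "'g \<Rightarrow> int"

definition gr_set :: "'g set \<Rightarrow> 'g grpring" where
  "gr_set X = (\<lambda>g. if g \<in> X then 1 else 0)"

definition gr_mult :: "'g::{ab_group_add,finite} grpring \<Rightarrow> 'g grpring \<Rightarrow> 'g grpring" where
  "gr_mult X Y = (\<lambda>g. \<Sum>h\<in>UNIV. X h * Y (g - h))"

definition set_inv :: "'g::ab_group_add set \<Rightarrow> 'g set" where
  "set_inv X = uminus ` X"

definition gr_smult :: "int \<Rightarrow> 'g grpring \<Rightarrow> 'g grpring" where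
  "gr_smult c X = (\<lambda>g. c * X g)"

text \<open>{e} \<times> X : embed an element of Z[F] into Z[Z_2 \<times> F].\<close>
definition gr_lift :: "bit \<Rightarrow> 'a grpring \<Rightarrow> (bit \<times> 'a) grpring" where
  "gr_lift e X = (\<lambda>(e', x). if e' = e then X x else 0)"

end

theory Submission
  imports Defs "HOL-Library.Cardinality"
begin

text \<open>
  Since 4 divides \<open>q + 1\<close>, each cyclotomic class \<open>C\<^sub>i\<close> of order 4 is a union of cosets of
  \<open>F\<^sub>q\<^sup>* = \<langle>w ^ (q + 1)\<rangle>\<close>, i.e.\ of punctured \<open>F\<^sub>q\<close>-lines through \<open>0\<close>: \<open>D\<^sub>2\<close> is the union of
  half of the \<open>q + 1\<close> lines and \<open>D\<^sub>0\<close> is its complement in \<open>F\<^sup>*\<close>.  A line through \<open>0\<close> and a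
  line through \<open>x \<noteq> 0\<close> whose directions differ from each other and from that of \<open>x\<close> meet in
  exactly one point; counting such pairs gives \<open>|D\<^sub>2 \<inter> (D\<^sub>2 + x)| = (q\<^sup>2 - 1) / 4 - [x \<in> D\<^sub>2]\<close>.
  Moreover \<open>-1 = w ^ ((q\<^sup>2 - 1) / 2)\<close> lies in \<open>C\<^sub>0\<close>, so \<open>D\<^sub>2 = -D\<^sub>2\<close>.  The indicators of \<open>D\<^sub>0\<close> and
  of its complement are affine combinations of \<open>1\<close>, \<open>\<delta>\<^sub>0\<close> and the indicator of \<open>D\<^sub>2\<close>, so every
  coefficient of \<open>B\<^sub>0 B\<^sub>0 ^ (-1) + B\<^sub>1 B\<^sub>1 ^ (-1)\<close> is a linear expression in these counts.
\<close>

lemma card_mod_in_lessThan_mult: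
  assumes "R \<subseteq> {..<m}"
  shows "card {i. i < m * s \<and> i mod m \<in> R} = s * card R"
proof -
  have "bij_betw (\<lambda>(k, r). m * k + r) ({..<s} \<times> R) {i. i < m * s \<and> i mod m \<in> R}"
  proof (rule bij_betwI[where g = "\<lambda>i. (i div m, i mod m)"])
    show "(\<lambda>(k, r). m * k + r) \<in> {..<s} \<times> R \<rightarrow> {i. i < m * s \<and> i mod m \<in> R}"
    proof clarify
      fix k r assume "k < s" "r \<in> R"
      moreover have "r < m" using \<open>r \<in> R\<close> assms by auto
      moreover have "m * k + m \<le> m * s" using \<open>k < s\<close>
        by (metis mult_Suc_right mult_le_mono2 Suc_leI add.commute)
      ultimately show "m * k + r < m * s \<and> (m * k + r) mod m \<in> R" by simp
    qed
    show "(\<lambda>i. (i div m, i mod m)) \<in> {i. i < m * s \<and> i mod m \<in> R} \<rightarrow> {..<s} \<times> R"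
      by (auto simp: less_mult_imp_div_less mult.commute)
  qed (use assms in \<open>auto\<close>)
  then have "card ({..<s} \<times> R) = card {i. i < m * s \<and> i mod m \<in> R}"
    by (rule bij_betw_same_card)
  then show ?thesis by (simp add: card_cartesian_product)
qed

lemma card_off_diagonal:
  assumes "finite T"
  shows "card {p \<in> T \<times> T. fst p \<noteq> snd p} = card T * card T - card T"
proof -
  have "{p \<in> T \<times> T. fst p \<noteq> snd p} = T \<times> T - (\<lambda>t. (t, t)) ` T" by auto
  moreover have "card ((\<lambda>t. (t, t)) ` T) = card T" by (rule card_image) (simp add: inj_on_def)
  ultimately show ?thesis
    using assms by (simp add: card_Diff_subset card_cartesian_product image_subset_iff)
qed

section \<open>Correlations in the group ring\<close>

lemma sum_UNIV_diff_shift: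
  fixes f :: "'g::{ab_group_add,finite} \<Rightarrow> 'b::comm_monoid_add"
  shows "(\<Sum>y\<in>UNIV. f (y - x)) = (\<Sum>y\<in>UNIV. f y)"
  by (rule sum.reindex_bij_witness[of _ "\<lambda>y. y + x" "\<lambda>y. y - x"]) auto

definition correlation :: "('g::{ab_group_add,finite} \<Rightarrow> int) \<Rightarrow> ('g \<Rightarrow> int) \<Rightarrow> 'g \<Rightarrow> int" where
  "correlation f g x = (\<Sum>y\<in>UNIV. f y * g (y - x))"

lemma gr_set_set_inv: "gr_set (set_inv B) x = gr_set B (- x)"
  by (force simp: gr_set_def set_inv_def)

lemma gr_mult_set_inv: "gr_mult X (gr_set (set_inv B)) = correlation X (gr_set B)"
  by (auto simp: gr_mult_def correlation_def gr_set_set_inv)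

lemma card_two_layers:
  fixes X Y :: "'a set"
  assumes "finite X" "finite Y"
  shows "card ({0::bit} \<times> X \<union> {1} \<times> Y) = card X + card Y"
  using assms by (subst card_Un_disjoint) (auto simp: card_cartesian_product)

lemma sum_UNIV_bit_times:
  fixes F :: "bit \<times> 'a::finite \<Rightarrow> 'b::comm_monoid_add"
  shows "(\<Sum>h\<in>UNIV. F h) = (\<Sum>y\<in>UNIV. F (0, y)) + (\<Sum>y\<in>UNIV. F (1, y))"
proof -
  have "(\<Sum>h\<in>UNIV. F h) = (\<Sum>h\<in>{0, 1} \<times> UNIV. F h)"
    by (rule sum.cong) (use bit_not_zero_iff in auto)
  then show ?thesis by (simp add: sum.cartesian_product')
qed

lemma correlation_two_layers:
  fixes X Y :: "'g::{ab_group_add,finite} set"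
  defines "B \<equiv> {0::bit} \<times> X \<union> {1} \<times> Y"
  shows "correlation (gr_set B) (gr_set B) (e, x) =
    (if e = 0 then correlation (gr_set X) (gr_set X) x + correlation (gr_set Y) (gr_set Y) x
     else correlation (gr_set X) (gr_set Y) x + correlation (gr_set Y) (gr_set X) x)"
proof -
  have layer0: "gr_set B (0, y) = gr_set X y" and layer1: "gr_set B (1, y) = gr_set Y y" for y
    by (auto simp: B_def gr_set_def)
  have "correlation (gr_set B) (gr_set B) (e, x)
      = (\<Sum>y\<in>UNIV. gr_set X y * gr_set B (- e, y - x))
        + (\<Sum>y\<in>UNIV. gr_set Y y * gr_set B (1 - e, y - x))"
    unfolding correlation_def sum_UNIV_bit_times by (simp add: layer0 layer1)
  then show ?thesis
    using bit_not_zero_iff[of e] by (cases "e = 0") (simp_all add: layer0 layer1 correlation_def)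
qed

lemma correlation_gr_set:
  "correlation (gr_set X) (gr_set Y) x = int (card {y \<in> X. y - x \<in> Y})"
proof -
  have "correlation (gr_set X) (gr_set Y) x = (\<Sum>y\<in>UNIV. of_bool (y \<in> X \<and> y - x \<in> Y))"
    unfolding correlation_def by (rule sum.cong) (auto simp: gr_set_def)
  then show ?thesis by simp
qed

lemma correlation_affine:
  fixes D :: "'g::{ab_group_add,finite} set"
  assumes symmetric: "\<And>y. - y \<in> D \<longleftrightarrow> y \<in> D"
  defines "\<delta> \<equiv> gr_set {0}" and "\<chi> \<equiv> gr_set D"
  shows "correlation (\<lambda>y. a + b * \<delta> y + c * \<chi> y) (\<lambda>y. a' + b' * \<delta> y + c' * \<chi> y) x
    = a * a' * CARD('g) + a * b' + b * a' + (a * c' + c * a') * card D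
      + b * b' * \<delta> x + (b * c' + c * b') * \<chi> x + c * c' * card {y \<in> D. y - x \<in> D}"
proof -
  have delta_left: "(\<Sum>y\<in>UNIV. \<delta> y * f y) = f 0" for f :: "'g \<Rightarrow> int"
  proof -
    have "(\<Sum>y\<in>UNIV. \<delta> y * f y) = (\<Sum>y\<in>UNIV. if y = 0 then f y else 0)"
      by (rule sum.cong) (auto simp: \<delta>_def gr_set_def)
    then show ?thesis by simp
  qed
  have delta_right: "(\<Sum>y\<in>UNIV. f y * \<delta> (y - x)) = f x" for f :: "'g \<Rightarrow> int"
  proof -
    have "(\<Sum>y\<in>UNIV. f y * \<delta> (y - x)) = (\<Sum>y\<in>UNIV. if y = x then f y else 0)"
      by (rule sum.cong) (auto simp: \<delta>_def gr_set_def)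
    then show ?thesis by simp
  qed
  have sum_\<chi>: "(\<Sum>y\<in>UNIV. \<chi> y) = card D"
    by (simp add: \<chi>_def gr_set_def sum.If_cases)
  have sum_\<chi>\<chi>: "(\<Sum>y\<in>UNIV. \<chi> y * \<chi> (y - x)) = card {y \<in> D. y - x \<in> D}"
    using correlation_gr_set[of D D x] by (simp add: \<chi>_def correlation_def)
  have \<delta>_uminus: "\<delta> (- x) = \<delta> x" by (simp add: \<delta>_def gr_set_def)
  have \<chi>_uminus: "\<chi> (- x) = \<chi> x" by (simp add: \<chi>_def gr_set_def symmetric)
  have "correlation (\<lambda>y. a + b * \<delta> y + c * \<chi> y) (\<lambda>y. a' + b' * \<delta> y + c' * \<chi> y) x
    = (\<Sum>y\<in>UNIV. a * a' + a * b' * \<delta> (y - x) + a * c' * \<chi> (y - x) + b * a' * \<delta> y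
        + b * b' * (\<delta> y * \<delta> (y - x)) + b * c' * (\<delta> y * \<chi> (y - x)) + c * a' * \<chi> y
        + c * b' * (\<chi> y * \<delta> (y - x)) + c * c' * (\<chi> y * \<chi> (y - x)))"
    unfolding correlation_def by (intro sum.cong refl) (simp add: algebra_simps)
  also have "\<dots> = a * a' * CARD('g) + a * b' * (\<Sum>y\<in>UNIV. \<delta> (y - x))
      + a * c' * (\<Sum>y\<in>UNIV. \<chi> (y - x)) + b * a' * (\<Sum>y\<in>UNIV. \<delta> y)
      + b * b' * (\<Sum>y\<in>UNIV. \<delta> y * \<delta> (y - x)) + b * c' * (\<Sum>y\<in>UNIV. \<delta> y * \<chi> (y - x))
      + c * a' * (\<Sum>y\<in>UNIV. \<chi> y) + c * b' * (\<Sum>y\<in>UNIV. \<chi> y * \<delta> (y - x))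
      + c * c' * (\<Sum>y\<in>UNIV. \<chi> y * \<chi> (y - x))"
    by (simp add: sum.distrib sum_distrib_left)
  also have "\<dots> = a * a' * CARD('g) + a * b' + b * a' + (a * c' + c * a') * card D
      + b * b' * \<delta> x + (b * c' + c * b') * \<chi> x + c * c' * card {y \<in> D. y - x \<in> D}"
    using delta_left[of "\<lambda>_. 1"] delta_right[of "\<lambda>_. 1"] delta_left[of "\<lambda>y. \<delta> (y - x)"]
      delta_left[of "\<lambda>y. \<chi> (y - x)"] delta_right[of \<chi>]
    by (simp add: sum_UNIV_diff_shift[of \<chi>] sum_\<chi> sum_\<chi>\<chi> \<delta>_uminus \<chi>_uminus algebra_simps)
  finally show ?thesis .
qed

section \<open>Finite fields and primitive elements\<close>

lemma CHAR_dvd_card_UNIV: "CHAR('a::{ring_1,finite}) dvd card (UNIV :: 'a set)"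
proof -
  have "(\<Sum>y\<in>UNIV. y + 1) = (\<Sum>y\<in>(UNIV :: 'a set). y)"
    by (rule sum.reindex_bij_witness[of _ "\<lambda>y. y - 1" "\<lambda>y. y + 1"]) auto
  then have "of_nat (card (UNIV :: 'a set)) = (0 :: 'a)"
    by (simp add: sum.distrib)
  then show ?thesis by (simp add: of_nat_eq_0_iff_char_dvd)
qed

lemma finite_field_add_power_eq:
  fixes x y :: "'a::{field,finite}"
  assumes "primepow q" and "card (UNIV :: 'a set) = q ^ k" and "k > 0"
  shows "(x + y) ^ q = x ^ q + y ^ q"
proof -
  obtain p j where p: "prime p" "j > 0" "q = p ^ j"
    using assms(1) by (auto simp: primepow_def)
  have prime_char: "prime CHAR('a)"
    by (rule prime_CHAR_semidom) (simp add: finite_imp_CHAR_pos)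
  have "CHAR('a) dvd p ^ (j * k)"
    using CHAR_dvd_card_UNIV[where 'a = 'a] assms(2) p(3) by (simp add: power_mult)
  then have "CHAR('a) = p"
    using prime_char p(1) prime_dvd_power primes_dvd_imp_eq by blast
  then show ?thesis
    using freshmans_dream'[OF prime_char, of q j] p(3) by simp
qed

lemma finite_field_power_card_minus_1:
  fixes x :: "'a::{field,finite}"
  assumes "x \<noteq> 0"
  shows "x ^ (CARD('a) - 1) = 1"
proof -
  have "x ^ (CARD('a) - 1) * (\<Prod>y\<in>UNIV - {0}. y) = (\<Prod>y\<in>UNIV - {0::'a}. x * y)"
    by (simp add: prod.distrib card_Diff_singleton)
  also have "\<dots> = (\<Prod>y\<in>UNIV - {0}. y)"
    by (rule prod.reindex_bij_witness[of _ "\<lambda>y. y / x" "\<lambda>y. x * y"]) (use assms in auto)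
  finally show ?thesis by simp
qed

locale primitive_root_field =
  fixes w :: "'a::{field,finite}" and N :: nat
  assumes primitive: "primitive_element w" and card_eq: "CARD('a) = N + 1"
begin

lemma w_nonzero: "w \<noteq> 0"
  using primitive by (simp add: primitive_element_def)

lemma range_power: "range (\<lambda>k. w ^ k) = UNIV - {0}"
  using primitive by (simp add: primitive_element_def)

lemma card_UNIV_minus_0: "card (UNIV - {0 :: 'a}) = N"
  by (simp add: card_Diff_singleton card_eq)

lemma N_pos: "N > 0"
proof -
  have "card {0, 1 :: 'a} \<le> card (UNIV :: 'a set)" by (rule card_mono) simp_all
  then show ?thesis by (simp add: card_eq)
qed

lemma power_N: "w ^ N = 1"
  using finite_field_power_card_minus_1[OF w_nonzero] by (simp add: card_eq)

lemma power_mod_N: "w ^ (k mod N) = w ^ k"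
proof -
  have "w ^ k = w ^ (N * (k div N) + k mod N)" by simp
  also have "\<dots> = w ^ (k mod N)" by (simp only: power_add power_mult power_N) simp
  finally show ?thesis ..
qed

lemma image_power_lessThan: "(\<lambda>k. w ^ k) ` {..<N} = UNIV - {0}"
proof
  show "UNIV - {0} \<subseteq> (\<lambda>k. w ^ k) ` {..<N}"
  proof
    fix a :: 'a assume "a \<in> UNIV - {0}"
    then obtain k where "a = w ^ k" using range_power by blast
    then show "a \<in> (\<lambda>k. w ^ k) ` {..<N}"
      using N_pos power_mod_N[of k] by (auto intro!: image_eqI[of _ _ "k mod N"])
  qed
qed (use w_nonzero in auto)

lemma inj_on_power_lessThan: "inj_on (\<lambda>k. w ^ k) {..<N}"
  using image_power_lessThan card_UNIV_minus_0 by (intro eq_card_imp_inj_on) auto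

lemma power_eq_power_iff: "w ^ i = w ^ j \<longleftrightarrow> i mod N = j mod N"
proof
  assume "w ^ i = w ^ j"
  then have "w ^ (i mod N) = w ^ (j mod N)" by (simp add: power_mod_N)
  then show "i mod N = j mod N"
    using inj_on_power_lessThan N_pos by (auto simp: inj_on_def)
qed (metis power_mod_N)

definition dlog :: "'a \<Rightarrow> nat" where
  "dlog a = inv_into {..<N} (\<lambda>k. w ^ k) a"

lemma dlog_less: "a \<noteq> 0 \<Longrightarrow> dlog a < N"
  and power_dlog: "a \<noteq> 0 \<Longrightarrow> w ^ dlog a = a"
  using inv_into_into[of a "\<lambda>k. w ^ k" "{..<N}"] f_inv_into_f[of a "\<lambda>k. w ^ k" "{..<N}"]
  by (auto simp: dlog_def image_power_lessThan)

lemma dlog_power: "dlog (w ^ i) = i mod N"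
proof -
  have "w ^ dlog (w ^ i) = w ^ i" by (simp add: power_dlog w_nonzero)
  then show ?thesis
    using dlog_less[of "w ^ i"] w_nonzero by (simp add: power_eq_power_iff)
qed

lemma card_nonzero_dlog: "card {a. a \<noteq> 0 \<and> P (dlog a)} = card {k. k < N \<and> P k}"
proof -
  have "{a. a \<noteq> 0 \<and> P (dlog a)} = (\<lambda>k. w ^ k) ` {k. k < N \<and> P k}"
    using dlog_less power_dlog w_nonzero by (force simp: dlog_power)
  moreover have "inj_on (\<lambda>k. w ^ k) {k. k < N \<and> P k}"
    by (rule inj_on_subset[OF inj_on_power_lessThan]) auto
  ultimately show ?thesis by (simp add: card_image)
qed

lemma power_half_N: "even N \<Longrightarrow> w ^ (N div 2) = -1"
proof -
  assume "even N"
  then have "w ^ (N div 2) * w ^ (N div 2) = 1"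
    by (metis power_add power_N dvd_mult_div_cancel mult_2)
  moreover have "w ^ (N div 2) \<noteq> 1"
    using power_eq_power_iff[of "N div 2" 0] N_pos \<open>even N\<close> by (auto elim: evenE)
  ultimately show ?thesis by (simp add: square_eq_1_iff)
qed

lemma cyc_class_iff:
  assumes "M dvd N" and "r < M"
  shows "a \<in> cyc_class M w r \<longleftrightarrow> a \<noteq> 0 \<and> dlog a mod M = r"
proof
  assume "a \<in> cyc_class M w r"
  then obtain k where a: "a = w ^ (r + M * k)"
    by (auto simp: cyc_class_def power_add power_mult)
  then have "dlog a mod M = (r + M * k) mod M"
    by (simp add: dlog_power mod_mod_cancel assms(1))
  then show "a \<noteq> 0 \<and> dlog a mod M = r" using a assms(2) w_nonzero by simp
next
  assume a: "a \<noteq> 0 \<and> dlog a mod M = r"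
  then have "a = w ^ (r + M * (dlog a div M))"
    by (metis power_dlog mod_mult_div_eq)
  then show "a \<in> cyc_class M w r"
    by (auto simp: cyc_class_def power_add power_mult)
qed

end

section \<open>Lines through the origin in a field of order \<open>q\<^sup>2\<close>\<close>

locale quadratic_field = primitive_root_field +
  fixes q :: nat
  assumes primepow: "primepow q" and N_plus_1: "N + 1 = q ^ 2"
begin

lemma q_gt_1: "q > 1"
  using primepow_gt_Suc_0[OF primepow] by simp

lemma N_eq: "N = (q + 1) * (q - 1)"
proof -
  have "(q + 1) * (q - 1) + 1 = q ^ 2"
    using q_gt_1 by (cases q) (simp_all add: power2_eq_square)
  then show ?thesis using N_plus_1 by linarith
qed

lemma frobenius_add: "(x + y :: 'a) ^ q = x ^ q + y ^ q"
  by (rule finite_field_add_power_eq[OF primepow, where k = 2])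
    (use N_plus_1 in \<open>simp_all add: card_eq\<close>)

definition base_field :: "'a set" where
  "base_field = {z. z ^ q = z}"

lemma one_in_base_field: "1 \<in> base_field"
  by (simp add: base_field_def)

lemma add_in_base_field: "u \<in> base_field \<Longrightarrow> v \<in> base_field \<Longrightarrow> u + v \<in> base_field"
  by (simp add: base_field_def frobenius_add)

lemma uminus_in_base_field: "u \<in> base_field \<Longrightarrow> - u \<in> base_field"
proof -
  assume "u \<in> base_field"
  have "u ^ q + (- u) ^ q = 0"
    using frobenius_add[of u "- u"] q_gt_1 by (simp add: power_0_left)
  then show "- u \<in> base_field"
    using \<open>u \<in> base_field\<close> by (simp add: base_field_def add_eq_0_iff)
qed

lemma diff_in_base_field: "u \<in> base_field \<Longrightarrow> v \<in> base_field \<Longrightarrow> u - v \<in> base_field"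
  using add_in_base_field[of u "- v"] uminus_in_base_field by simp

lemma divide_in_base_field: "u \<in> base_field \<Longrightarrow> v \<in> base_field \<Longrightarrow> u / v \<in> base_field"
  by (simp add: base_field_def power_divide)

lemma in_base_field_iff: "z \<noteq> 0 \<Longrightarrow> z \<in> base_field \<longleftrightarrow> z ^ (q - 1) = 1"
  using q_gt_1 power_Suc[of z "q - 1"] by (simp add: base_field_def)

text \<open>The multiplicative group of the subfield \<open>base_field\<close> is generated by \<open>w ^ (q + 1)\<close>, so
  \<open>direction a\<close> indexes the coset \<open>a \<cdot> base_field\<^sup>*\<close>: the line through \<open>0\<close> and \<open>a\<close>.\<close>

definition direction :: "'a \<Rightarrow> nat" where
  "direction a = dlog a mod (q + 1)"

lemma direction_less: "direction a < q + 1"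
  by (simp add: direction_def)

lemma direction_eq_iff:
  assumes "a \<noteq> 0" and "b \<noteq> 0"
  shows "direction a = direction b \<longleftrightarrow> a / b \<in> base_field"
proof -
  have "a / b \<in> base_field \<longleftrightarrow> a ^ (q - 1) = b ^ (q - 1)"
    using assms by (simp add: in_base_field_iff power_divide)
  also have "\<dots> \<longleftrightarrow> w ^ (dlog a * (q - 1)) = w ^ (dlog b * (q - 1))"
    using assms by (simp add: power_mult power_dlog)
  also have "\<dots> \<longleftrightarrow> dlog a * (q - 1) mod ((q + 1) * (q - 1)) = dlog b * (q - 1) mod ((q + 1) * (q - 1))"
    unfolding power_eq_power_iff N_eq ..
  also have "\<dots> \<longleftrightarrow> direction a = direction b"
    unfolding mod_mult_mult2 direction_def using q_gt_1 by simp
  finally show ?thesis ..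
qed

lemma card_direction_fibre:
  assumes "r < q + 1"
  shows "card {a. a \<noteq> 0 \<and> direction a = r} = q - 1"
proof -
  have "card {a. a \<noteq> 0 \<and> direction a = r} = card {k. k < N \<and> k mod (q + 1) \<in> {r}}"
    using card_nonzero_dlog[of "\<lambda>k. k mod (q + 1) = r"] by (simp add: direction_def)
  also have "\<dots> = card {k. k < (q + 1) * (q - 1) \<and> k mod (q + 1) \<in> {r}}"
    by (simp only: N_eq)
  also have "\<dots> = q - 1"
    using assms by (subst card_mod_in_lessThan_mult) auto
  finally show ?thesis .
qed

lemma direction_diff:
  assumes "x \<noteq> 0" and "a \<noteq> 0" and "direction a \<noteq> direction x"
  shows "a - x \<noteq> 0" and "direction (a - x) \<noteq> direction x" and "direction a \<noteq> direction (a - x)"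
proof -
  show ax: "a - x \<noteq> 0" using assms(3) by auto
  show "direction (a - x) \<noteq> direction x"
  proof
    assume "direction (a - x) = direction x"
    then have "(a - x) / x + 1 \<in> base_field"
      using ax assms(1) by (simp add: direction_eq_iff add_in_base_field one_in_base_field)
    moreover have "(a - x) / x + 1 = a / x" using assms(1) by (simp add: field_simps)
    ultimately show False using assms by (simp add: direction_eq_iff)
  qed
  show "direction a \<noteq> direction (a - x)"
  proof
    assume "direction a = direction (a - x)"
    then have "1 - (a - x) / a \<in> base_field"
      using ax assms(2) direction_eq_iff[of "a - x" a]
      by (simp add: diff_in_base_field one_in_base_field)
    moreover have "1 - (a - x) / a = x / a" using assms(2) by (simp add: field_simps)
    ultimately show False using assms direction_eq_iff[of x a] by auto
  qed
qed

lemma inj_on_direction_pair: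
  assumes "x \<noteq> 0"
  shows "inj_on (\<lambda>a. (direction a, direction (a - x))) {a. a \<noteq> 0 \<and> direction a \<noteq> direction x}"
proof (rule inj_onI)
  fix a b
  assume a: "a \<in> {a. a \<noteq> 0 \<and> direction a \<noteq> direction x}"
    and b: "b \<in> {a. a \<noteq> 0 \<and> direction a \<noteq> direction x}"
    and eq: "(direction a, direction (a - x)) = (direction b, direction (b - x))"
  have "a - x \<noteq> 0" and "b - x \<noteq> 0"
    using a b assms direction_diff(1) by auto
  define c where "c = b / a"
  define e where "e = (b - x) / (a - x)"
  have c: "c \<in> base_field"
    using a b eq direction_eq_iff[of b a] by (simp add: c_def)
  have e: "e \<in> base_field"
    using eq direction_eq_iff[of "b - x" "a - x"] \<open>a - x \<noteq> 0\<close> \<open>b - x \<noteq> 0\<close> by (simp add: e_def)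
  have key: "(c - e) * a = (1 - e) * x"
    using a \<open>a - x \<noteq> 0\<close> by (simp add: c_def e_def field_simps)
  have "c = e"
  proof (rule ccontr)
    assume "c \<noteq> e"
    then have "a / x = (1 - e) / (c - e)"
      using key assms by (simp add: field_simps)
    then have "a / x \<in> base_field"
      using c e by (simp add: diff_in_base_field divide_in_base_field one_in_base_field)
    then show False
      using a assms direction_eq_iff[of a x] by simp
  qed
  then have "e = 1" using key assms by simp
  then show "a = b" using \<open>a - x \<noteq> 0\<close> by (simp add: e_def)
qed

text \<open>For distinct directions \<open>d, d'\<close> different from that of \<open>x\<close>, the line through \<open>0\<close> with
  direction \<open>d\<close> and the line through \<open>x\<close> with direction \<open>d'\<close> meet in exactly one point.\<close>

lemma bij_betw_direction_pair:
  assumes "x \<noteq> 0"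
  defines "T \<equiv> {..<q + 1} - {direction x}"
  shows "bij_betw (\<lambda>a. (direction a, direction (a - x)))
           {a. a \<noteq> 0 \<and> direction a \<noteq> direction x} {p \<in> T \<times> T. fst p \<noteq> snd p}"
proof -
  let ?D = "{a. a \<noteq> 0 \<and> direction a \<noteq> direction x}"
  have "card ?D = card (UNIV - {0 :: 'a}) - card {a. a \<noteq> 0 \<and> direction a = direction x}"
    by (subst card_Diff_subset[symmetric]) (auto intro: arg_cong[where f = card])
  also have "\<dots> = q * q - q"
    using N_eq card_direction_fibre[OF direction_less[of x]] q_gt_1
    by (simp add: card_UNIV_minus_0 algebra_simps diff_mult_distrib)
  finally have card_D: "card ?D = q * q - q" .
  have "card T = q"
    using direction_less[of x] by (simp add: T_def card_Diff_singleton)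
  then have card_pairs: "card {p \<in> T \<times> T. fst p \<noteq> snd p} = q * q - q"
    by (simp add: card_off_diagonal T_def)
  show ?thesis
    unfolding bij_betw_def
  proof
    show "inj_on (\<lambda>a. (direction a, direction (a - x))) ?D"
      by (rule inj_on_direction_pair[OF assms(1)])
    show "(\<lambda>a. (direction a, direction (a - x))) ` ?D = {p \<in> T \<times> T. fst p \<noteq> snd p}"
    proof (rule card_subset_eq)
      show "finite {p \<in> T \<times> T. fst p \<noteq> snd p}" by (simp add: T_def)
      show "(\<lambda>a. (direction a, direction (a - x))) ` ?D \<subseteq> {p \<in> T \<times> T. fst p \<noteq> snd p}"
        using direction_diff[OF assms(1)] direction_less by (auto simp: T_def)
      show "card ((\<lambda>a. (direction a, direction (a - x))) ` ?D) = card {p \<in> T \<times> T. fst p \<noteq> snd p}"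
        using card_image[OF inj_on_direction_pair[OF assms(1)]] card_D card_pairs by simp
    qed
  qed
qed

definition cone :: "nat set \<Rightarrow> 'a set" where
  "cone S = {a. a \<noteq> 0 \<and> direction a \<in> S}"

lemma card_cone_inter_translate_on_line:
  assumes "x \<noteq> 0"
  shows "card {a \<in> cone S. a - x \<in> cone S \<and> direction a = direction x}
           = (if direction x \<in> S then q - 2 else 0)"
proof (cases "direction x \<in> S")
  case True
  have "{a \<in> cone S. a - x \<in> cone S \<and> direction a = direction x}
      = {a. a \<noteq> 0 \<and> direction a = direction x} - {x}"
  proof (intro equalityI subsetI)
    fix a assume "a \<in> {a. a \<noteq> 0 \<and> direction a = direction x} - {x}"
    then have a: "a \<noteq> 0" "a \<noteq> x" "direction a = direction x" by auto
    have "(a - x) / x = a / x - 1" using assms by (simp add: field_simps)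
    then have "direction (a - x) = direction x"
      using a assms direction_eq_iff[of a x] direction_eq_iff[of "a - x" x]
      by (simp add: diff_in_base_field one_in_base_field)
    then show "a \<in> {a \<in> cone S. a - x \<in> cone S \<and> direction a = direction x}"
      using a True by (simp add: cone_def)
  qed (auto simp: cone_def)
  then show ?thesis
    using True card_direction_fibre[OF direction_less[of x]] assms
    by (simp add: card_Diff_singleton)
qed (auto simp: cone_def)

lemma card_cone_inter_translate_off_line:
  assumes "x \<noteq> 0" and "S \<subseteq> {..<q + 1}"
  shows "card {a \<in> cone S. a - x \<in> cone S \<and> direction a \<noteq> direction x}
           = card (S - {direction x}) * card (S - {direction x}) - card (S - {direction x})"
proof -
  let ?T = "{..<q + 1} - {direction x}"
  have "bij_betw (\<lambda>a. (direction a, direction (a - x)))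
          {a \<in> {a. a \<noteq> 0 \<and> direction a \<noteq> direction x}. a \<in> cone S \<and> a - x \<in> cone S}
          {p \<in> {p \<in> ?T \<times> ?T. fst p \<noteq> snd p}. p \<in> S \<times> S}"
    using direction_diff[OF assms(1)]
    by (intro bij_betw_Collect[OF bij_betw_direction_pair[OF assms(1)]]) (auto simp: cone_def)
  moreover have "{a \<in> {a. a \<noteq> 0 \<and> direction a \<noteq> direction x}. a \<in> cone S \<and> a - x \<in> cone S}
      = {a \<in> cone S. a - x \<in> cone S \<and> direction a \<noteq> direction x}"
    by (auto simp: cone_def)
  moreover have "{p \<in> {p \<in> ?T \<times> ?T. fst p \<noteq> snd p}. p \<in> S \<times> S}
      = {p \<in> (S - {direction x}) \<times> (S - {direction x}). fst p \<noteq> snd p}"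
    using assms(2) by auto
  moreover have "finite (S - {direction x})"
    using assms(2) finite_subset by blast
  ultimately show ?thesis
    by (simp add: bij_betw_same_card card_off_diagonal)
qed

lemma card_cone_inter_translate:
  assumes "x \<noteq> 0" and "S \<subseteq> {..<q + 1}"
  shows "card {a \<in> cone S. a - x \<in> cone S}
           = (if direction x \<in> S then q - 2 else 0)
             + (card (S - {direction x}) * card (S - {direction x}) - card (S - {direction x}))"
proof -
  have "{a \<in> cone S. a - x \<in> cone S}
      = {a \<in> cone S. a - x \<in> cone S \<and> direction a = direction x}
        \<union> {a \<in> cone S. a - x \<in> cone S \<and> direction a \<noteq> direction x}"
    by auto
  then have "card {a \<in> cone S. a - x \<in> cone S}
      = card {a \<in> cone S. a - x \<in> cone S \<and> direction a = direction x}
        + card {a \<in> cone S. a - x \<in> cone S \<and> direction a \<noteq> direction x}"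
    by (simp add: card_Un_disjoint disjoint_iff)
  then show ?thesis
    using card_cone_inter_translate_on_line[OF assms(1)] card_cone_inter_translate_off_line[OF assms]
    by simp
qed

end

section \<open>The sets \<open>D\<^sub>0\<close> and \<open>D\<^sub>2\<close> for \<open>q \<equiv> 3 (mod 4)\<close>\<close>

locale quadratic_field_3_mod_4 = quadratic_field +
  assumes q_mod_4: "q mod 4 = 3"
begin

lemma q_eq: obtains s where "q = 4 * s + 3"
  using q_mod_4 by (metis mod_mult_div_eq add.commute)

lemma four_dvd_q_plus_1: "4 dvd q + 1"
  using q_mod_4 by presburger

lemma eight_dvd_N: "8 dvd N"
proof -
  obtain s where "q = 4 * s + 3" by (rule q_eq)
  then have "N = 8 * ((s + 1) * (2 * s + 1))"
    by (simp add: N_eq algebra_simps)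
  then show ?thesis by simp
qed

lemma four_dvd_N: "4 dvd N"
  using eight_dvd_N by (rule dvd_trans[rotated]) simp

lemma Dset_iff: "a \<in> Dset w i \<longleftrightarrow> a \<noteq> 0 \<and> dlog a mod 4 \<in> {i mod 4, Suc i mod 4}"
  using four_dvd_N by (auto simp: Dset_def cyc_class_iff)

lemma Dset_2_eq_cone: "Dset w 2 = cone {d. d < q + 1 \<and> d mod 4 \<in> {2, 3}}"
proof -
  have "direction a mod 4 = dlog a mod 4" for a
    using four_dvd_q_plus_1 by (simp add: direction_def mod_mod_cancel)
  then show ?thesis
    using direction_less by (auto simp: Dset_iff cone_def)
qed

lemma Dset_0_eq: "Dset w 0 = UNIV - {0} - Dset w 2"
  by (auto simp: Dset_iff)

lemma uminus_in_Dset_2_iff: "- a \<in> Dset w 2 \<longleftrightarrow> a \<in> Dset w 2"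
proof (cases "a = 0")
  case False
  have "even N" using four_dvd_N by (rule dvd_trans[rotated]) simp
  then have "- a = w ^ (dlog a + N div 2)"
    using False by (simp add: power_add power_dlog power_half_N)
  then have "dlog (- a) mod 4 = (dlog a + N div 2) mod 4"
    using four_dvd_N by (simp add: dlog_power mod_mod_cancel)
  also have "\<dots> = dlog a mod 4"
    using eight_dvd_N by (auto elim!: dvdE)
  finally show ?thesis using False by (simp add: Dset_iff)
qed simp

lemma card_Dset_2: "card (Dset w 2) = N div 2"
proof -
  have "Dset w 2 = {a. a \<noteq> 0 \<and> dlog a mod 4 \<in> {2, 3}}"
    by (auto simp: Dset_iff)
  then have "card (Dset w 2) = card {k. k < 4 * (N div 4) \<and> k mod 4 \<in> {2, 3}}"
    using card_nonzero_dlog[of "\<lambda>k. k mod 4 \<in> {2, 3}"] four_dvd_N by simp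
  also have "\<dots> = N div 2"
    using four_dvd_N by (subst card_mod_in_lessThan_mult) auto
  finally show ?thesis .
qed

lemma card_Dset_2_inter_translate:
  assumes "x \<noteq> 0"
  shows "4 * int (card {a \<in> Dset w 2. a - x \<in> Dset w 2}) = int N - 4 * gr_set (Dset w 2) x"
proof -
  define S where "S = {d. d < q + 1 \<and> d mod 4 \<in> {2, 3}}"
  obtain s where q: "q = 4 * s + 3" by (rule q_eq)
  have "S = {d. d < 4 * (s + 1) \<and> d mod 4 \<in> {2, 3}}"
    by (simp add: S_def q)
  then have "card S = (s + 1) * card {2, 3 :: nat}"
    using card_mod_in_lessThan_mult[of "{2, 3}" 4 "s + 1"] by simp
  then have card_S: "card S = 2 * s + 2" by simp
  have N: "N = (4 * s + 4) * (4 * s + 2)"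
    by (simp add: N_eq q)
  have x_in_iff: "x \<in> Dset w 2 \<longleftrightarrow> direction x \<in> S"
    using assms by (simp add: Dset_2_eq_cone cone_def S_def)
  have count: "card {a \<in> Dset w 2. a - x \<in> Dset w 2} = (if direction x \<in> S then q - 2 else 0)
      + (card (S - {direction x}) * card (S - {direction x}) - card (S - {direction x}))"
    unfolding Dset_2_eq_cone S_def by (rule card_cone_inter_translate[OF assms]) auto
  show ?thesis
  proof (cases "direction x \<in> S")
    case True
    then have "card (S - {direction x}) = 2 * s + 1" by (simp add: card_S)
    then have "card {a \<in> Dset w 2. a - x \<in> Dset w 2} = 4 * s + 1 + (2 * s + 1) * (2 * s)"
      using count True by (simp add: q algebra_simps)
    then show ?thesis
      using True x_in_iff by (simp add: N gr_set_def algebra_simps)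
  next
    case False
    then have "card {a \<in> Dset w 2. a - x \<in> Dset w 2} = (2 * s + 2) * (2 * s + 1)"
      using count card_S by (simp add: algebra_simps)
    then show ?thesis
      using False x_in_iff by (simp add: N gr_set_def algebra_simps)
  qed
qed

lemma int_q_square: "int q ^ 2 = int N + 1"
  using N_plus_1 by (simp flip: of_nat_power)

lemma twice_card_Dset_2: "2 * card (Dset w 2) = N"
  using card_Dset_2 four_dvd_N by auto

text \<open>The next two indicators are written in the shape expected by \<open>correlation_affine\<close>.\<close>

lemma gr_set_Dset_0:
  "gr_set (Dset w 0) = (\<lambda>y. 1 + (- 1) * gr_set {0} y + (- 1) * gr_set (Dset w 2) y)"
  by (auto simp: gr_set_def Dset_0_eq Dset_iff)

lemma gr_set_compl_Dset_0:
  "gr_set (UNIV - Dset w 0) = (\<lambda>y. 0 + 1 * gr_set {0} y + 1 * gr_set (Dset w 2) y)"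
  by (auto simp: gr_set_def Dset_0_eq Dset_iff)

lemma correlation_Dset_layer_0:
  "correlation (gr_set (Dset w 0)) (gr_set (Dset w 0)) x
     + correlation (gr_set (UNIV - Dset w 0)) (gr_set (UNIV - Dset w 0)) x
     + 2 * correlation (gr_set (Dset w 2)) (gr_set (Dset w 2)) x
   = (if x = 0 then 2 * int (q ^ 2) - 1 else int (q ^ 2) - 2)"
proof -
  let ?M = "int (card {y \<in> Dset w 2. y - x \<in> Dset w 2})"
  have "correlation (gr_set (Dset w 0)) (gr_set (Dset w 0)) x
     + correlation (gr_set (UNIV - Dset w 0)) (gr_set (UNIV - Dset w 0)) x
     + 2 * correlation (gr_set (Dset w 2)) (gr_set (Dset w 2)) x
     = int N - 1 - int (2 * card (Dset w 2)) + 2 * gr_set {0} x + 4 * gr_set (Dset w 2) x + 4 * ?M"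
    unfolding gr_set_Dset_0 gr_set_compl_Dset_0 correlation_affine[OF uminus_in_Dset_2_iff]
    using card_eq by (simp add: correlation_gr_set)
  moreover have "int (2 * card (Dset w 2)) = int N"
    by (simp only: twice_card_Dset_2)
  ultimately show ?thesis
    using card_Dset_2_inter_translate[of x] Dset_iff[of 0 2]
    by (cases "x = 0") (simp_all add: int_q_square gr_set_def)
qed

lemma correlation_Dset_layer_1:
  "correlation (gr_set (Dset w 0)) (gr_set (UNIV - Dset w 0)) x
     + correlation (gr_set (UNIV - Dset w 0)) (gr_set (Dset w 0)) x
     + 2 * correlation (gr_set (Dset w 2)) (gr_set (Dset w 2)) x
   = 2 * gr_set (Dset w 0) x - 2 * gr_set (Dset w 2) x + int (q ^ 2) - 1"
proof -
  have "correlation (gr_set (Dset w 0)) (gr_set (UNIV - Dset w 0)) x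
     + correlation (gr_set (UNIV - Dset w 0)) (gr_set (Dset w 0)) x
     + 2 * correlation (gr_set (Dset w 2)) (gr_set (Dset w 2)) x
     = 2 + int (2 * card (Dset w 2)) - 2 * gr_set {0} x - 4 * gr_set (Dset w 2) x"
    unfolding gr_set_Dset_0 gr_set_compl_Dset_0 correlation_affine[OF uminus_in_Dset_2_iff]
    by (simp add: correlation_gr_set)
  moreover have "int (2 * card (Dset w 2)) = int N"
    by (simp only: twice_card_Dset_2)
  ultimately show ?thesis
    by (simp add: int_q_square gr_set_Dset_0)
qed

end

theorem proposition2p2:
  fixes q :: nat and w :: "'a::{field,finite}"
  assumes "primepow q" and "q mod 4 = 3" and "card (UNIV :: 'a set) = q ^ 2"
    and "primitive_element w"
  defines "B0 \<equiv> ({0} \<times> Dset w 0) \<union> ({1} \<times> (UNIV - Dset w 0))"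
    and "B1 \<equiv> ({0} \<times> Dset w 2) \<union> ({1} \<times> Dset w 2)"
  shows "card B0 = q ^ 2 \<and> card B1 = q ^ 2 - 1 \<and>
         gr_mult (gr_set B0) (gr_set (set_inv B0)) + gr_mult (gr_set B1) (gr_set (set_inv B1))
         = gr_lift 0 (gr_smult (int (q ^ 2) - 2) (gr_set (UNIV - {0}))
                      + gr_smult (2 * int (q ^ 2) - 1) (gr_set {0}))
         + gr_lift 1 (gr_smult 2 (gr_set (Dset w 0)) - gr_smult 2 (gr_set (Dset w 2))
                      + gr_smult (int (q ^ 2) - 1) (gr_set UNIV))"
proof -
  interpret quadratic_field_3_mod_4 w "q ^ 2 - 1" q
    using assms(1-4) primepow_gt_Suc_0[OF assms(1)] by unfold_locales simp_all
  have "card B0 = q ^ 2"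
    using assms(3) card_mono[of UNIV "Dset w 0"]
    by (simp add: B0_def card_two_layers card_Diff_subset)
  moreover have "card B1 = q ^ 2 - 1"
    using twice_card_Dset_2 by (simp add: B1_def card_two_layers)
  moreover have "gr_mult (gr_set B0) (gr_set (set_inv B0)) (e, x)
        + gr_mult (gr_set B1) (gr_set (set_inv B1)) (e, x)
      = (gr_lift 0 (gr_smult (int (q ^ 2) - 2) (gr_set (UNIV - {0}))
                      + gr_smult (2 * int (q ^ 2) - 1) (gr_set {0}))
         + gr_lift 1 (gr_smult 2 (gr_set (Dset w 0)) - gr_smult 2 (gr_set (Dset w 2))
                      + gr_smult (int (q ^ 2) - 1) (gr_set UNIV))) (e, x)" for e x
    unfolding B0_def B1_def gr_mult_set_inv correlation_two_layers
    using correlation_Dset_layer_0[of x] correlation_Dset_layer_1[of x] bit_not_zero_iff[of e]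
    by (cases "e = 0") (auto simp: gr_lift_def gr_smult_def gr_set_def)
  ultimately show ?thesis by auto
qed

end
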